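(* There is a constant $C>0$ such that for every $n\ge1$: $\mathrm{Sen}(\overline{\mathcal S})\lesssim C\cdot\mathrm{Sen}(\tilde{\mathcal N})$, i.e., for every integer $0\le K\le\lfloor n/2\rfloor$ there is a probability measure $\mu_K$ on $[0,1/2]$ such that, entrywise, $\mathrm{Sen}(\overline{\mathcal S})_K\le C\int\mathrm{Sen}(\tilde{\mathcal N})_P\,d\mu_K(P)$.
   Context: Let $\mathbb{I}^n=\{0,1\}^n$ with Hamming distance $d$; operators on $\mathbb{R}^{\mathbb{I}^n}$ are identified with matrices and $A\le B$ means $B-A$ has nonnegative entries. For $0\le k\le n$, $(S_kf)(x)=\binom nk^{-1}\sum_{y:\,d(x,y)=k}f(y)$. $\mathrm{Sen}(\overline{\mathcal S})_K=\frac1{K+1}\sum_{\ell=0}^KS_\ell$ for $0\le K\le\lfloor n/2\rfloor$. For $p\in[0,1/2]$, $\tilde N_p=\sum_{k=0}^n\binom nkp^k(1-p)^{n-k}S_k$, and $\mathrm{Sen}(\tilde{\mathcal N})_P=\frac1P\int_0^P\tilde N_p\,dp$ for $P\in(0,1/2]$, with $\mathrm{Sen}(\tilde{\mathcal N})_0$ the identity (limit from above). For families $\mathcal A,\mathcal B$ of nonnegative matrices, $\mathcal A\lesssim\mathcal B$ means every $A\in\mathcal A$ satisfies $A\le\int B\,d\mu_A(B)$ for some probability measure $\mu_A$ on $\mathcal B$. *)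

theory Defs
  imports "HOL-Probability.Probability"
begin

text \<open>Points of the hypercube {0,1}^n are encoded as subsets of {..<n} (support of x).\<close>
definition hcube :: "nat \<Rightarrow> nat set set" where
  "hcube n = Pow {..<n}"

definition hdist :: "nat set \<Rightarrow> nat set \<Rightarrow> nat" where
  "hdist x y = card ((x - y) \<union> (y - x))"

definition S_op :: "nat \<Rightarrow> nat \<Rightarrow> nat set \<Rightarrow> nat set \<Rightarrow> real" where
  "S_op n k x y = (if hdist x y = k then 1 / real (n choose k) else 0)"

definition SenS :: "nat \<Rightarrow> nat \<Rightarrow> nat set \<Rightarrow> nat set \<Rightarrow> real" where
  "SenS n K x y = (1 / real (K + 1)) * (\<Sum>l=0..K. S_op n l x y)"

definition Ntil :: "nat \<Rightarrow> real \<Rightarrow> nat set \<Rightarrow> nat set \<Rightarrow> real" where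
  "Ntil n p x y = (\<Sum>k=0..n. real (n choose k) * p ^ k * (1 - p) ^ (n - k) * S_op n k x y)"

definition SenN :: "nat \<Rightarrow> real \<Rightarrow> nat set \<Rightarrow> nat set \<Rightarrow> real" where
  "SenN n P x y = (if P = 0 then (if x = y then 1 else 0)
                   else (1 / P) * integral {0..P} (\<lambda>p. Ntil n p x y))"

end

theory Submission
  imports Defs "HOL-Analysis.Weierstrass_Theorems"
begin

text \<open>
  Both sides depend on x and y only through d = hdist x y: for d \<le> K the entry of
  Sen(S)_K is 1/((K+1) C(n,d)), and Sen(N)_P is the mean over [0,P] of the Bernstein
  polynomial b_{n,d}, divided by C(n,d). Integrating b_{n,d} from 0 to P gives the
  probability that Bin(n+1,P) exceeds d, divided by n+1; this tail only grows as d
  decreases to 0. Hence a Dirac measure at a point P with (n+1)P \<le> 8(K+1) and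
  Pr[Bin(n+1,P) > K] \<ge> 1/2 works with C = 16. The point P = min(1/2, 4(K+1)/n)
  qualifies: Chebyshev's inequality covers P = 4(K+1)/n, the symmetry of Bin(n+1,1/2)
  covers P = 1/2.
\<close>

definition Bernstein_tail :: "nat \<Rightarrow> nat \<Rightarrow> real \<Rightarrow> real" where
  "Bernstein_tail m j x = (\<Sum>i=j..m. Bernstein m i x)"

lemma Bernstein_tail_nonneg: "0 \<le> x \<Longrightarrow> x \<le> 1 \<Longrightarrow> 0 \<le> Bernstein_tail m j x"
  unfolding Bernstein_tail_def by (intro sum_nonneg Bernstein_nonneg)

lemma Bernstein_tail_antimono:
  "0 \<le> x \<Longrightarrow> x \<le> 1 \<Longrightarrow> j \<le> k \<Longrightarrow> Bernstein_tail m k x \<le> Bernstein_tail m j x"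
  unfolding Bernstein_tail_def by (intro sum_mono2) (auto intro: Bernstein_nonneg)

lemma Bernstein_tail_eq_1_minus:
  assumes "K \<le> m"
  shows "Bernstein_tail m (Suc K) x = 1 - (\<Sum>i\<le>K. Bernstein m i x)"
proof -
  have "{..m} = {..K} \<union> {Suc K..m}" using assms by auto
  then have "(\<Sum>i\<le>m. Bernstein m i x) = (\<Sum>i\<le>K. Bernstein m i x) + Bernstein_tail m (Suc K) x"
    unfolding Bernstein_tail_def by (simp add: sum.union_disjoint)
  then show ?thesis by simp
qed

lemma Bernstein_tail_Suc_at_0: "Bernstein_tail m (Suc j) 0 = 0"
  unfolding Bernstein_tail_def Bernstein_def by (intro sum.neutral) auto

lemma has_real_derivative_Bernstein_Suc:
  "((\<lambda>x. Bernstein (Suc n) (Suc d) x) has_real_derivative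
     real (Suc n) * (Bernstein n d x - Bernstein n (Suc d) x)) (at x)"
proof -
  have absorb: "real (Suc d) * real (Suc n choose Suc d) = real (Suc n) * real (n choose d)"
    by (metis Suc_times_binomial of_nat_mult)
  have absorb_comp: "real (n - d) * real (Suc n choose Suc d) = real (Suc n) * real (n choose Suc d)"
    using binomial_absorb_comp[of "Suc n" "Suc d"] by (metis diff_Suc_1 diff_Suc_Suc of_nat_mult)
  have pow: "((\<lambda>x. x ^ Suc d) has_real_derivative real (Suc d) * x ^ d) (at x)"
    using DERIV_pow[of "Suc d" x UNIV] by simp
  have comp: "((\<lambda>x. (1 - x) ^ (n - d)) has_real_derivative - (real (n - d) * (1 - x) ^ (n - d - 1))) (at x)"
    by (auto intro!: derivative_eq_intros)
  have "((\<lambda>x. real (Suc n choose Suc d) * (x ^ Suc d * (1 - x) ^ (n - d))) has_real_derivative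
      real (Suc n choose Suc d) * (x ^ Suc d * - (real (n - d) * (1 - x) ^ (n - d - 1))
        + real (Suc d) * x ^ d * (1 - x) ^ (n - d))) (at x)"
    by (rule DERIV_cmult[OF DERIV_mult'[OF pow comp]])
  moreover have "real (Suc n choose Suc d) * (x ^ Suc d * - (real (n - d) * (1 - x) ^ (n - d - 1))
        + real (Suc d) * x ^ d * (1 - x) ^ (n - d))
      = (real (Suc d) * real (Suc n choose Suc d)) * x ^ d * (1 - x) ^ (n - d)
        - (real (n - d) * real (Suc n choose Suc d)) * x ^ Suc d * (1 - x) ^ (n - Suc d)"
    by (simp add: algebra_simps)
  also have "\<dots> = real (Suc n) * (Bernstein n d x - Bernstein n (Suc d) x)"
    unfolding absorb absorb_comp Bernstein_def by (simp add: algebra_simps)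
  ultimately show ?thesis unfolding Bernstein_def by (simp only: mult.assoc diff_Suc_Suc)
qed

lemma has_real_derivative_Bernstein_tail:
  assumes "d \<le> n"
  shows "(Bernstein_tail (Suc n) (Suc d) has_real_derivative real (Suc n) * Bernstein n d x) (at x)"
proof -
  have tail: "Bernstein_tail (Suc n) (Suc d) = (\<lambda>x. \<Sum>i=d..n. Bernstein (Suc n) (Suc i) x)"
    unfolding Bernstein_tail_def by (simp only: sum.shift_bounds_cl_Suc_ivl)
  have "(\<Sum>i=d..n. real (Suc n) * (Bernstein n i x - Bernstein n (Suc i) x))
      = real (Suc n) * (Bernstein n d x - Bernstein n (Suc n) x)"
    using sum_Suc_diff[of d n "\<lambda>i. - Bernstein n i x"] assms by (simp flip: sum_distrib_left)
  also have "\<dots> = real (Suc n) * Bernstein n d x"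
    by (simp add: Bernstein_def)
  finally have telescope: "(\<Sum>i=d..n. real (Suc n) * (Bernstein n i x - Bernstein n (Suc i) x))
      = real (Suc n) * Bernstein n d x" .
  have "((\<lambda>x. \<Sum>i=d..n. Bernstein (Suc n) (Suc i) x) has_real_derivative
      (\<Sum>i=d..n. real (Suc n) * (Bernstein n i x - Bernstein n (Suc i) x))) (at x)"
    by (intro DERIV_sum has_real_derivative_Bernstein_Suc)
  then show ?thesis unfolding tail telescope .
qed

lemma has_integral_Bernstein:
  assumes "d \<le> n" "0 \<le> P"
  shows "(Bernstein n d has_integral Bernstein_tail (Suc n) (Suc d) P / real (Suc n)) {0..P}"
proof -
  have "(Bernstein n d has_integral
      Bernstein_tail (Suc n) (Suc d) P / real (Suc n) - Bernstein_tail (Suc n) (Suc d) 0 / real (Suc n)) {0..P}"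
  proof (rule fundamental_theorem_of_calculus[OF assms(2)])
    fix x :: real
    have "((\<lambda>y. Bernstein_tail (Suc n) (Suc d) y / real (Suc n)) has_real_derivative Bernstein n d x) (at x)"
      using DERIV_cdivide[OF has_real_derivative_Bernstein_tail[OF assms(1)], of "real (Suc n)"] by simp
    then show "((\<lambda>y. Bernstein_tail (Suc n) (Suc d) y / real (Suc n)) has_vector_derivative Bernstein n d x)
        (at x within {0..P})"
      by (simp add: has_real_derivative_iff_has_vector_derivative[symmetric] has_field_derivative_at_within)
  qed
  then show ?thesis by (simp add: Bernstein_tail_Suc_at_0)
qed

lemma sum_Bernstein_sq_deviation:
  "(\<Sum>i\<le>m. Bernstein m i x * (real i - real m * x)^2) = real m * x * (1 - x)"
proof -
  have "(\<Sum>i\<le>m. Bernstein m i x * (real i - real m * x)^2)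
      = (\<Sum>i\<le>m. real i * (real i - 1) * Bernstein m i x
          + (1 - 2 * real m * x) * (real i * Bernstein m i x) + (real m * x)^2 * Bernstein m i x)"
    by (intro sum.cong) (simp_all add: power2_eq_square algebra_simps)
  also have "\<dots> = (\<Sum>i\<le>m. real i * (real i - 1) * Bernstein m i x)
        + (1 - 2 * real m * x) * (\<Sum>i\<le>m. real i * Bernstein m i x)
        + (real m * x)^2 * (\<Sum>i\<le>m. Bernstein m i x)"
    by (simp only: sum.distrib sum_distrib_left[symmetric])
  also have "\<dots> = real m * x * (1 - x)"
    by (simp only: sum_kk_Bernstein sum_k_Bernstein sum_Bernstein) (simp add: power2_eq_square algebra_simps)
  finally show ?thesis .
qed

lemma sum_Bernstein_atMost_le:
  assumes x: "0 \<le> x" "x \<le> 1" and lt: "real K < real m * x"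
  shows "(\<Sum>i\<le>K. Bernstein m i x) \<le> real m * x * (1 - x) / (real m * x - real K)^2"
proof -
  define D where "D = (real m * x - real K)^2"
  have D: "D > 0" unfolding D_def using lt by simp
  have "K \<le> m" using lt x mult_left_le[of x "real m"] by linarith
  have "(\<Sum>i\<le>K. Bernstein m i x) \<le> (\<Sum>i\<le>K. Bernstein m i x * (real i - real m * x)^2 / D)"
  proof (rule sum_mono)
    fix i assume "i \<in> {..K}"
    then have "(real m * x - real K)^2 \<le> (real m * x - real i)^2"
      using lt by (intro power_mono) simp_all
    then have "D \<le> (real i - real m * x)^2"
      unfolding D_def by (simp add: power2_commute)
    then have "Bernstein m i x * 1 \<le> Bernstein m i x * ((real i - real m * x)^2 / D)"
      using D by (intro mult_left_mono Bernstein_nonneg x) simp_all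
    then show "Bernstein m i x \<le> Bernstein m i x * (real i - real m * x)^2 / D" by simp
  qed
  also have "\<dots> \<le> (\<Sum>i\<le>m. Bernstein m i x * (real i - real m * x)^2 / D)"
    using \<open>K \<le> m\<close> D x by (intro sum_mono2) (auto intro!: divide_nonneg_pos mult_nonneg_nonneg Bernstein_nonneg)
  also have "\<dots> = real m * x * (1 - x) / D"
    by (simp add: sum_Bernstein_sq_deviation flip: sum_divide_distrib)
  finally show ?thesis unfolding D_def .
qed

lemma Bernstein_tail_ge_half:
  assumes x: "0 \<le> x" "x \<le> 1" and mean: "4 * real (Suc K) \<le> real m * x"
  shows "1/2 \<le> Bernstein_tail m (Suc K) x"
proof -
  define a where "a = real m * x"
  have a: "4 * real (Suc K) \<le> a" using mean unfolding a_def .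
  then have "real K < a" "a \<ge> 4" by simp_all
  then have "K \<le> m" using x mult_left_le[of x "real m"] unfolding a_def by linarith
  have "(\<Sum>i\<le>K. Bernstein m i x) \<le> a * (1 - x) / (a - real K)^2"
    using sum_Bernstein_atMost_le[OF x \<open>real K < a\<close>[unfolded a_def]] unfolding a_def .
  also have "\<dots> \<le> a / (a - real K)^2"
    using x \<open>a \<ge> 4\<close> by (intro divide_right_mono) simp_all
  also have "\<dots> \<le> 1/2"
  proof -
    have "3 * a / 4 \<le> a - real K" using a by simp
    then have "(3 * a / 4)^2 \<le> (a - real K)^2"
      using \<open>a \<ge> 4\<close> by (intro power_mono) simp_all
    moreover have "2 * a \<le> (3 * a / 4)^2"
      using \<open>a \<ge> 4\<close> by (simp add: power2_eq_square)
    ultimately have "2 * a \<le> (a - real K)^2" by linarith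
    then show ?thesis using \<open>real K < a\<close> by (simp add: divide_le_eq)
  qed
  finally show ?thesis using Bernstein_tail_eq_1_minus[OF \<open>K \<le> m\<close>] by simp
qed

lemma Bernstein_reflect: "i \<le> m \<Longrightarrow> Bernstein m (m - i) x = Bernstein m i (1 - x)"
  unfolding Bernstein_def by (simp add: binomial_symmetric[symmetric])

lemma Bernstein_tail_half_ge_half:
  assumes "2 * K + 1 \<le> m"
  shows "1/2 \<le> Bernstein_tail m (Suc K) (1/2)"
proof -
  have "(\<Sum>i\<le>K. Bernstein m i (1/2)) = (\<Sum>i\<le>K. Bernstein m (m - i) (1/2))"
    using assms by (intro sum.cong) (simp_all add: Bernstein_reflect)
  also have "\<dots> = (\<Sum>j\<in>(\<lambda>i. m - i) ` {..K}. Bernstein m j (1/2))"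
    using assms by (subst sum.reindex) (auto simp: inj_on_def)
  also have "\<dots> \<le> Bernstein_tail m (Suc K) (1/2)"
    unfolding Bernstein_tail_def using assms by (intro sum_mono2) (auto intro: Bernstein_nonneg)
  finally show ?thesis using Bernstein_tail_eq_1_minus[of K m "1/2"] assms by simp
qed

lemma hdist_le: "x \<in> hcube n \<Longrightarrow> y \<in> hcube n \<Longrightarrow> hdist x y \<le> n"
  unfolding hcube_def hdist_def by (intro card_mono[of "{..<n}", simplified]) auto

lemma hdist_eq_0_iff: "x \<in> hcube n \<Longrightarrow> y \<in> hcube n \<Longrightarrow> hdist x y = 0 \<longleftrightarrow> x = y"
  unfolding hcube_def hdist_def using finite_subset[of _ "{..<n}"] by auto

lemma SenS_eq:
  "SenS n K x y = (if hdist x y \<le> K then 1 / (real (Suc K) * real (n choose hdist x y)) else 0)"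
proof -
  have S: "(\<lambda>l. S_op n l x y) = (\<lambda>l. if l = hdist x y then 1 / real (n choose hdist x y) else 0)"
    unfolding S_op_def by auto
  show ?thesis unfolding SenS_def by (subst S) simp
qed

lemma Ntil_eq_Bernstein:
  assumes "hdist x y \<le> n"
  shows "Ntil n p x y = Bernstein n (hdist x y) p / real (n choose hdist x y)"
proof -
  have terms: "(\<lambda>k. real (n choose k) * p ^ k * (1 - p) ^ (n - k) * S_op n k x y)
      = (\<lambda>k. if k = hdist x y then Bernstein n k p / real (n choose k) else 0)"
    unfolding S_op_def Bernstein_def by auto
  show ?thesis unfolding Ntil_def by (subst terms) (simp add: assms)
qed

text \<open>The mean of Bernstein n d over [0,P] (see has_integral_Bernstein); at P = 0 its limit,
  Bernstein n d 0.\<close>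
definition Bernstein_avg :: "nat \<Rightarrow> nat \<Rightarrow> real \<Rightarrow> real" where
  "Bernstein_avg n d P =
     (if P = 0 then of_bool (d = 0) else Bernstein_tail (Suc n) (Suc d) P / (real (Suc n) * P))"

lemma Bernstein_avg_measurable: "Bernstein_avg n d \<in> borel_measurable borel"
  unfolding Bernstein_avg_def Bernstein_tail_def Bernstein_def by measurable

lemma Bernstein_avg_nonneg: "0 \<le> P \<Longrightarrow> P \<le> 1 \<Longrightarrow> 0 \<le> Bernstein_avg n d P"
  unfolding Bernstein_avg_def by (simp add: Bernstein_tail_nonneg)

lemma SenN_eq_Bernstein_avg:
  assumes xy: "x \<in> hcube n" "y \<in> hcube n" and "0 \<le> P"
  shows "SenN n P x y = Bernstein_avg n (hdist x y) P / real (n choose hdist x y)"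
proof (cases "P = 0")
  case True
  then show ?thesis
    unfolding SenN_def Bernstein_avg_def using hdist_eq_0_iff[OF xy] by auto
next
  case False
  note d = hdist_le[OF xy]
  have "((\<lambda>p. Ntil n p x y) has_integral
      Bernstein_tail (Suc n) (Suc (hdist x y)) P / real (Suc n) / real (n choose hdist x y)) {0..P}"
    unfolding Ntil_eq_Bernstein[OF d] by (intro has_integral_divide has_integral_Bernstein d \<open>0 \<le> P\<close>)
  then show ?thesis
    unfolding SenN_def Bernstein_avg_def using False by (simp add: integral_unique field_simps)
qed

definition probe_point :: "nat \<Rightarrow> nat \<Rightarrow> real" where
  "probe_point n K = min (1/2) (4 * real (Suc K) / real n)"

lemma probe_point_bounds:
  assumes n: "1 \<le> n" and K: "K \<le> n div 2"
  shows "0 < probe_point n K" "probe_point n K \<le> 1/2"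
    and "1/2 \<le> Bernstein_tail (Suc n) (Suc K) (probe_point n K)"
    and "real (Suc n) * probe_point n K \<le> 8 * real (Suc K)"
proof -
  show "0 < probe_point n K" "probe_point n K \<le> 1/2"
    unfolding probe_point_def using n by simp_all
  have "1/2 \<le> Bernstein_tail (Suc n) (Suc K) (probe_point n K) \<and>
      real (Suc n) * probe_point n K \<le> 8 * real (Suc K)"
  proof (cases "8 * Suc K \<le> n")
    case True
    define P where "P = 4 * real (Suc K) / real n"
    have "8 * real (Suc K) \<le> real n" using True by linarith
    then have half: "P \<le> 1/2" unfolding P_def using n by (simp add: field_simps)
    have "probe_point n K = P" unfolding probe_point_def P_def[symmetric] using half by simp
    moreover have "0 \<le> P" unfolding P_def by simp
    ultimately have P: "probe_point n K = P" "0 \<le> P" "P \<le> 1" using half by simp_all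
    have "4 * real (Suc K) = real n * P" unfolding P_def using n by simp
    also have "\<dots> \<le> real (Suc n) * P" using P by (simp add: mult_right_mono)
    finally have "1/2 \<le> Bernstein_tail (Suc n) (Suc K) P"
      using P by (intro Bernstein_tail_ge_half) simp_all
    moreover have "real (Suc n) * P \<le> 2 * real n * P"
      using n P by (intro mult_right_mono) simp_all
    moreover have "2 * real n * P = 8 * real (Suc K)"
      unfolding P_def using n by simp
    ultimately show ?thesis using P by simp
  next
    case False
    then have half: "probe_point n K = 1/2" unfolding probe_point_def using n by (simp add: field_simps)
    have "1/2 \<le> Bernstein_tail (Suc n) (Suc K) (1/2)"
      using K by (intro Bernstein_tail_half_ge_half) simp
    moreover have "real (Suc n) \<le> real (8 * Suc K)"
      using False by (intro of_nat_mono) simp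
    ultimately show ?thesis unfolding half by simp
  qed
  then show "1/2 \<le> Bernstein_tail (Suc n) (Suc K) (probe_point n K)"
    "real (Suc n) * probe_point n K \<le> 8 * real (Suc K)" by simp_all
qed

lemma Bernstein_avg_probe_point_ge:
  assumes n: "1 \<le> n" and K: "K \<le> n div 2" and "d \<le> K"
  shows "1 / (16 * real (Suc K)) \<le> Bernstein_avg n d (probe_point n K)"
proof -
  define P where "P = probe_point n K"
  note bounds = probe_point_bounds[OF n K, folded P_def]
  have "1 / (16 * real (Suc K)) \<le> 1 / (2 * (real (Suc n) * P))"
    using bounds by (intro divide_left_mono) simp_all
  also have "\<dots> = (1/2) / (real (Suc n) * P)"
    by simp
  also have "\<dots> \<le> Bernstein_tail (Suc n) (Suc K) P / (real (Suc n) * P)"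
    using bounds by (intro divide_right_mono) simp_all
  also have "\<dots> \<le> Bernstein_tail (Suc n) (Suc d) P / (real (Suc n) * P)"
    using bounds \<open>d \<le> K\<close> by (intro divide_right_mono Bernstein_tail_antimono) simp_all
  also have "\<dots> = Bernstein_avg n d P"
    unfolding Bernstein_avg_def using bounds by simp
  finally show ?thesis unfolding P_def .
qed

lemma SenS_le_16_SenN_probe_point:
  assumes n: "1 \<le> n" and K: "K \<le> n div 2" and xy: "x \<in> hcube n" "y \<in> hcube n"
  shows "SenS n K x y \<le> 16 * SenN n (probe_point n K) x y"
proof -
  define d where "d = hdist x y"
  have SenN: "SenN n (probe_point n K) x y = Bernstein_avg n d (probe_point n K) / real (n choose d)"
    unfolding d_def using probe_point_bounds(1)[OF n K] by (intro SenN_eq_Bernstein_avg xy) simp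
  have avg_nonneg: "0 \<le> Bernstein_avg n d (probe_point n K)"
    using probe_point_bounds(1,2)[OF n K] by (intro Bernstein_avg_nonneg) simp_all
  show ?thesis
  proof (cases "d \<le> K")
    case True
    have "1 / real (Suc K) \<le> 16 * Bernstein_avg n d (probe_point n K)"
      using Bernstein_avg_probe_point_ge[OF n K True] by (simp add: field_simps)
    then have "1 / real (Suc K) / real (n choose d)
        \<le> 16 * Bernstein_avg n d (probe_point n K) / real (n choose d)"
      by (rule divide_right_mono) simp
    then show ?thesis
      unfolding SenS_eq SenN d_def[symmetric] using True by simp
  next
    case False
    then show ?thesis unfolding SenS_eq SenN d_def[symmetric] using avg_nonneg by simp
  qed
qed

lemma SenN_measurable:
  assumes "x \<in> hcube n" "y \<in> hcube n"
  shows "(\<lambda>P. SenN n P x y) \<in> borel_measurable (restrict_space borel {0..1/2})"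
proof -
  have "(\<lambda>P. Bernstein_avg n (hdist x y) P / real (n choose hdist x y))
      \<in> borel_measurable (restrict_space borel {0..1/2})"
    by (intro measurable_restrict_space1 borel_measurable_divide Bernstein_avg_measurable) simp
  then show ?thesis
    by (subst measurable_cong) (simp_all add: SenN_eq_Bernstein_avg assms)
qed

lemma integrable_return:
  fixes f :: "'a \<Rightarrow> real"
  assumes "x \<in> space M" "f \<in> borel_measurable M"
  shows "integrable (return M x) f"
proof -
  have "(\<lambda>y. ennreal (norm (f y))) \<in> borel_measurable M" using assms(2) by measurable
  then show ?thesis
    using assms by (simp add: integrable_iff_bounded nn_integral_return)
qed

theorem lemma5:
  shows "\<exists>C::real. C > 0 \<and>
    (\<forall>n::nat. n \<ge> 1 \<longrightarrow>
      (\<forall>K::nat. K \<le> n div 2 \<longrightarrow>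
        (\<exists>\<mu>::real measure. prob_space \<mu> \<and>
            sets \<mu> = sets (restrict_space borel {0..1/2}) \<and>
            (\<forall>x\<in>hcube n. \<forall>y\<in>hcube n.
               integrable \<mu> (\<lambda>P. SenN n P x y) \<and>
               SenS n K x y \<le> C * (\<integral>P. SenN n P x y \<partial>\<mu>)))))"
proof (intro exI[of _ 16] conjI allI impI)
  fix n K :: nat
  assume n: "1 \<le> n" and K: "K \<le> n div 2"
  define M where "M = restrict_space (borel :: real measure) {0..1/2}"
  have P: "probe_point n K \<in> space M"
    unfolding M_def using probe_point_bounds(1,2)[OF n K] by simp
  show "\<exists>\<mu>. prob_space \<mu> \<and> sets \<mu> = sets (restrict_space borel {0..1/2}) \<and>
      (\<forall>x\<in>hcube n. \<forall>y\<in>hcube n. integrable \<mu> (\<lambda>P. SenN n P x y) \<and>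
         SenS n K x y \<le> 16 * (\<integral>P. SenN n P x y \<partial>\<mu>))"
  proof (intro exI[of _ "return M (probe_point n K)"] conjI ballI)
    fix x y assume xy: "x \<in> hcube n" "y \<in> hcube n"
    note meas = SenN_measurable[OF xy, folded M_def]
    show "integrable (return M (probe_point n K)) (\<lambda>P. SenN n P x y)"
      by (rule integrable_return[OF P meas])
    show "SenS n K x y \<le> 16 * (\<integral>P. SenN n P x y \<partial>return M (probe_point n K))"
      unfolding integral_return[OF P meas] by (rule SenS_le_16_SenN_probe_point[OF n K xy])
  qed (use P in \<open>simp_all add: prob_space_return M_def\<close>)
qed simp

end
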